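(* In the setting described in the context, let $\Lambda > 1$ be a constant such that for every $x \in \Omega$ and all nonnegative reals $a_0,\dots,a_q$ with $a_i = 0$ whenever $u_i(x) \leq -2\Lambda^{-1}$, one has $\sum_{i=0}^q a_i \leq \Lambda |\sum_{i=0}^q a_i N_i|$. Then for every $\gamma \in (0,\frac12)$ there exists $\bar\lambda$ such that for all $\lambda_0 \geq \bar\lambda$ the following holds: if $0 \leq k \leq q$ and $x \in \Omega$ satisfies $-\Lambda^{-1} \leq \hat u_k(x) \leq 0$, then $|d\hat u_k| \geq \Lambda^{-1}$ at $x$. In particular, $\hat\Sigma = \{\hat u_q = 0\}$ is a smooth hypersurface.
   Context: $n\ge3$; $u_0,\dots,u_q$ are non-constant linear (affine) functions on $\mathbb{R}^n$ and $\Omega=\bigcap_{m=0}^q\{u_m\le 0\}$ is a compact convex polytope with non-empty interior, such that: (a) for each $k$, $\{u_k>0\}\cap\bigcap_{m\neq k}\{u_m\le0\}\neq\emptyset$; (b) the Euclidean gradient of each $u_k$ is a unit vector $N_k$; (c) for $j<k$, if some $x\in\Omega$ has $u_j(x)=u_k(x)=0$ then $\langle N_j,N_k\rangle\le0$. Fix a smooth even $\eta:\mathbb{R}\to\mathbb{R}$ with $\eta(t)=|t|$ for $|t|\ge\frac12$ and $\eta''\ge0$. For $\gamma\in(0,\frac12)$, $\lambda_0>1$ put $\lambda_k=\gamma^{-k}\lambda_0$, $\hat u_0=u_0$, $\hat u_k=\frac12\big(\hat u_{k-1}+u_k+\lambda_k^{-1}\eta(\lambda_k(\hat u_{k-1}-u_k))\big)$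 for $1\le k\le q$. *)

theory Defs
  imports "HOL-Analysis.Analysis"
begin

definition lam :: "real \<Rightarrow> real \<Rightarrow> nat \<Rightarrow> real" where
  "lam \<gamma> l0 k = l0 / \<gamma> ^ k"

primrec uhat :: "(real \<Rightarrow> real) \<Rightarrow> real \<Rightarrow> real \<Rightarrow> (nat \<Rightarrow> 'a \<Rightarrow> real) \<Rightarrow> nat \<Rightarrow> 'a \<Rightarrow> real" where
  "uhat \<eta> \<gamma> l0 u 0 x = u 0 x"
| "uhat \<eta> \<gamma> l0 u (Suc k) x =
     (uhat \<eta> \<gamma> l0 u k x + u (Suc k) x
      + \<eta> (lam \<gamma> l0 (Suc k) * (uhat \<eta> \<gamma> l0 u k x - u (Suc k) x)) / lam \<gamma> l0 (Suc k)) / 2"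

definition smooth_real :: "(real \<Rightarrow> real) \<Rightarrow> bool" where
  "smooth_real f \<longleftrightarrow> (\<forall>m t. ((deriv ^^ m) f) differentiable (at t))"

end

theory Submission
  imports Defs
begin

text \<open>Each uhat_k is a smoothed maximum of uhat_(k-1) and u_k; the derivative of such a smoothed
  maximum is a convex combination of the two derivatives, and a summand carries positive weight
  only if it lies within lambda_k^(-1) of the smoothed maximum. By induction, d uhat_k is a
  convex combination of the N_i whose active indices satisfy
  uhat_k \<le> u_i + sum_j lambda_j^(-1) < u_i + lambda_0^(-1).
  If uhat_k(x) \<ge> -Lambda^(-1) and lambda_0 \<ge> Lambda, every active index has u_i(x) > -2 Lambda^(-1),
  so the hypothesis on Lambda applies to the weights and bounds |d uhat_k| below by Lambda^(-1).
  Since the smoothed maximum dominates the maximum, u_i \<le> uhat_q, so the level set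
  {uhat_q = 0} lies in Omega and the bound applies there.\<close>

lemma smooth_real_has_real_derivative:
  assumes "smooth_real f"
  shows "((deriv ^^ m) f has_real_derivative deriv ((deriv ^^ m) f) t) (at t)"
  using assms by (simp add: smooth_real_def DERIV_deriv_iff_real_differentiable)

lemma lam_pos: "0 < \<gamma> \<Longrightarrow> 0 < l0 \<Longrightarrow> 0 < lam \<gamma> l0 k"
  by (simp add: lam_def)

lemma sum_inverse_lam_less:
  assumes "0 < \<gamma>" "\<gamma> < 1/2" "0 < l0"
  shows "(\<Sum>j=1..k. 1 / lam \<gamma> l0 j) < 1 / l0"
proof -
  have "(\<Sum>j=1..k. \<gamma> ^ j) \<le> \<gamma> / (1 - \<gamma>)"
    using assms by (auto simp: sum_gp divide_right_mono)
  also have "\<dots> < 1"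
    using assms by (simp add: divide_less_eq)
  finally have "(\<Sum>j=1..k. \<gamma> ^ j) / l0 < 1 / l0"
    using assms(3) by (simp add: divide_strict_right_mono)
  then show ?thesis
    by (simp add: lam_def sum_divide_distrib)
qed

locale abs_smoothing =
  fixes \<eta> :: "real \<Rightarrow> real"
  assumes smooth: "smooth_real \<eta>"
    and even: "\<And>t. \<eta> (- t) = \<eta> t"
    and eq_abs: "\<And>t. \<bar>t\<bar> \<ge> 1/2 \<Longrightarrow> \<eta> t = \<bar>t\<bar>"
    and convex: "\<And>t. deriv (deriv \<eta>) t \<ge> 0"
begin

lemma has_real_derivative: "(\<eta> has_real_derivative deriv \<eta> t) (at t)"
  using smooth_real_has_real_derivative[OF smooth, of 0] by simp

lemma mono_deriv:
  assumes "s \<le> t"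
  shows "deriv \<eta> s \<le> deriv \<eta> t"
proof (rule DERIV_nonneg_imp_nondecreasing[OF assms])
  show "\<exists>y. (deriv \<eta> has_real_derivative y) (at x) \<and> 0 \<le> y" for x
    using smooth_real_has_real_derivative[OF smooth, of 1 x] convex by auto
qed

lemma deriv_eq_minus_one:
  assumes "t < -1/2"
  shows "deriv \<eta> t = -1"
proof -
  have "((\<lambda>x. - x) has_real_derivative -1) (at t)"
    by (auto intro!: derivative_eq_intros)
  then have "(\<eta> has_real_derivative -1) (at t)"
    by (rule has_field_derivative_transform_within_open[where S = "{..< -1/2}"])
      (use assms eq_abs in auto)
  then show ?thesis
    using has_real_derivative DERIV_unique by blast
qed

lemma deriv_eq_one:
  assumes "t > 1/2"
  shows "deriv \<eta> t = 1"
proof -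
  have "((\<lambda>x. x) has_real_derivative 1) (at t)"
    by (auto intro!: derivative_eq_intros)
  then have "(\<eta> has_real_derivative 1) (at t)"
    by (rule has_field_derivative_transform_within_open[where S = "{1/2 <..}"])
      (use assms eq_abs in auto)
  then show ?thesis
    using has_real_derivative DERIV_unique by blast
qed

lemma abs_deriv_le_one: "\<bar>deriv \<eta> t\<bar> \<le> 1"
  using mono_deriv[of t 1] mono_deriv[of "-1" t] deriv_eq_one[of 1] deriv_eq_minus_one[of "-1"]
    deriv_eq_one[of t] deriv_eq_minus_one[of t]
  by (cases "t > 1/2"; cases "t < -1/2") auto

lemma lipschitz: "\<bar>\<eta> s - \<eta> t\<bar> \<le> \<bar>s - t\<bar>"
  using field_differentiable_bound[of UNIV \<eta> "deriv \<eta>" 1 s t]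
    has_real_derivative abs_deriv_le_one by auto

lemma abs_le: "\<bar>t\<bar> \<le> \<eta> t"
proof -
  have "t \<le> \<eta> t" for t
    using eq_abs[of t] lipschitz[of "1/2" t] eq_abs[of "1/2"] by (cases "t \<ge> 1/2") auto
  then show ?thesis
    using even[of t] by (metis abs_real_def minus_le_iff)
qed

lemma le_abs_plus_one: "\<eta> t \<le> \<bar>t\<bar> + 1"
  using lipschitz[of t "1/2"] eq_abs[of "1/2"] by auto

text \<open>Since L^(-1) eta(L t) approximates |t| to within L^(-1), this approximates
  max a b = (a + b + |a - b|) / 2.\<close>
definition smooth_max :: "real \<Rightarrow> real \<Rightarrow> real \<Rightarrow> real" where
  "smooth_max L a b = (a + b + \<eta> (L * (a - b)) / L) / 2"

lemma uhat_Suc_smooth_max: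
  "uhat \<eta> \<gamma> l0 u (Suc k) x = smooth_max (lam \<gamma> l0 (Suc k)) (uhat \<eta> \<gamma> l0 u k x) (u (Suc k) x)"
  by (simp add: smooth_max_def)

lemma max_le_smooth_max:
  assumes "L > 0"
  shows "max a b \<le> smooth_max L a b"
proof -
  have "L * \<bar>a - b\<bar> \<le> \<eta> (L * (a - b))"
    using abs_le[of "L * (a - b)"] assms by (simp add: abs_mult)
  then have "\<bar>a - b\<bar> \<le> \<eta> (L * (a - b)) / L"
    using assms by (simp add: le_divide_eq mult.commute)
  then show ?thesis
    unfolding smooth_max_def max_def by (auto split: abs_split)
qed

lemma smooth_max_eq_left: "L \<noteq> 0 \<Longrightarrow> smooth_max L a b = a + (\<eta> (L * (a - b)) - L * (a - b)) / (2 * L)"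
  and smooth_max_eq_right: "L \<noteq> 0 \<Longrightarrow> smooth_max L a b = b + (\<eta> (L * (a - b)) + L * (a - b)) / (2 * L)"
  by (simp_all add: smooth_max_def field_simps)

lemma smooth_max_le_left:
  assumes "L > 0" and "deriv \<eta> (L * (a - b)) \<noteq> -1"
  shows "smooth_max L a b \<le> a + 1 / L"
proof -
  have "L * (a - b) \<ge> -1/2"
    using assms(2) deriv_eq_minus_one by force
  then have "\<eta> (L * (a - b)) - L * (a - b) \<le> 2"
    using le_abs_plus_one[of "L * (a - b)"] by linarith
  then have "(\<eta> (L * (a - b)) - L * (a - b)) / (2 * L) \<le> 1 / L"
    using assms(1) by (simp add: divide_le_eq)
  then show ?thesis
    using smooth_max_eq_left assms(1) by simp
qed

lemma smooth_max_le_right: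
  assumes "L > 0" and "deriv \<eta> (L * (a - b)) \<noteq> 1"
  shows "smooth_max L a b \<le> b + 1 / L"
proof -
  have "L * (a - b) \<le> 1/2"
    using assms(2) deriv_eq_one by force
  then have "\<eta> (L * (a - b)) + L * (a - b) \<le> 2"
    using le_abs_plus_one[of "L * (a - b)"] by linarith
  then have "(\<eta> (L * (a - b)) + L * (a - b)) / (2 * L) \<le> 1 / L"
    using assms(1) by (simp add: divide_le_eq)
  then show ?thesis
    using smooth_max_eq_right assms(1) by simp
qed

lemma has_derivative_smooth_max:
  fixes f g :: "'a::real_normed_vector \<Rightarrow> real"
  assumes "L > 0" and "(f has_derivative f') (at x)" and "(g has_derivative g') (at x)"
  defines "e \<equiv> deriv \<eta> (L * (f x - g x))"
  shows "((\<lambda>y. smooth_max L (f y) (g y)) has_derivative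
           (\<lambda>h. (1 + e) / 2 * f' h + (1 - e) / 2 * g' h)) (at x)"
proof -
  have "((\<lambda>y. \<eta> (L * (f y - g y))) has_derivative (\<lambda>h. L * (f' h - g' h) * e)) (at x)"
    unfolding e_def by (intro DERIV_compose_FDERIV[OF has_real_derivative] derivative_intros assms)
  then have "((\<lambda>y. smooth_max L (f y) (g y)) has_derivative
      (\<lambda>h. (f' h + g' h + L * (f' h - g' h) * e / L) / 2)) (at x)"
    unfolding smooth_max_def using assms(1) by (auto intro!: derivative_eq_intros assms)
  then show ?thesis
    by (rule has_derivative_eq_rhs) (use assms(1) in \<open>auto simp: fun_eq_iff field_simps\<close>)
qed

lemma u_le_uhat:
  assumes "0 < \<gamma>" "0 < l0" "i \<le> k"
  shows "u i x \<le> uhat \<eta> \<gamma> l0 u k x"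
  using assms(3)
proof (induction k)
  case 0
  then show ?case by simp
next
  case (Suc k)
  have "max (uhat \<eta> \<gamma> l0 u k x) (u (Suc k) x) \<le> uhat \<eta> \<gamma> l0 u (Suc k) x"
    unfolding uhat_Suc_smooth_max by (rule max_le_smooth_max[OF lam_pos[OF assms(1,2)]])
  then show ?case
    using Suc by (cases "i = Suc k") auto
qed

lemma uhat_has_derivative_convex_combination:
  fixes u :: "nat \<Rightarrow> 'a::real_inner \<Rightarrow> real" and N :: "nat \<Rightarrow> 'a"
  assumes pos: "0 < \<gamma>" "0 < l0"
    and du: "\<And>i. i \<le> k \<Longrightarrow> (u i has_derivative (\<lambda>h. N i \<bullet> h)) (at x)"
  shows "\<exists>a. (uhat \<eta> \<gamma> l0 u k has_derivative (\<lambda>h. (\<Sum>i\<le>k. a i *\<^sub>R N i) \<bullet> h)) (at x)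
     \<and> (\<forall>i\<le>k. 0 \<le> a i) \<and> (\<Sum>i\<le>k. a i) = 1
     \<and> (\<forall>i\<le>k. a i \<noteq> 0 \<longrightarrow> uhat \<eta> \<gamma> l0 u k x \<le> u i x + (\<Sum>j=1..k. 1 / lam \<gamma> l0 j))"
  using du
proof (induction k)
  case 0
  have "uhat \<eta> \<gamma> l0 u 0 = u 0"
    by (rule ext) simp
  then show ?case
    using "0.prems"[of 0] by (intro exI[of _ "\<lambda>_. 1"]) auto
next
  case (Suc k)
  then obtain a where a: "(uhat \<eta> \<gamma> l0 u k has_derivative (\<lambda>h. (\<Sum>i\<le>k. a i *\<^sub>R N i) \<bullet> h)) (at x)"
      "\<forall>i\<le>k. 0 \<le> a i" "(\<Sum>i\<le>k. a i) = 1"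
      "\<forall>i\<le>k. a i \<noteq> 0 \<longrightarrow> uhat \<eta> \<gamma> l0 u k x \<le> u i x + (\<Sum>j=1..k. 1 / lam \<gamma> l0 j)"
    by auto
  define L where "L = lam \<gamma> l0 (Suc k)"
  define e where "e = deriv \<eta> (L * (uhat \<eta> \<gamma> l0 u k x - u (Suc k) x))"
  define a' where "a' = (\<lambda>i. if i = Suc k then (1 - e) / 2 else (1 + e) / 2 * a i)"
  have L: "L > 0"
    unfolding L_def using lam_pos[OF pos] .
  have uhat_Suc: "uhat \<eta> \<gamma> l0 u (Suc k) = (\<lambda>y. smooth_max L (uhat \<eta> \<gamma> l0 u k y) (u (Suc k) y))"
    unfolding L_def by (intro ext) (rule uhat_Suc_smooth_max)
  have grad: "(\<Sum>i\<le>Suc k. a' i *\<^sub>R N i) =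
      ((1 + e) / 2) *\<^sub>R (\<Sum>i\<le>k. a i *\<^sub>R N i) + ((1 - e) / 2) *\<^sub>R N (Suc k)"
    by (simp add: a'_def scaleR_sum_right)
  have "(uhat \<eta> \<gamma> l0 u (Suc k) has_derivative (\<lambda>h. (\<Sum>i\<le>Suc k. a' i *\<^sub>R N i) \<bullet> h)) (at x)"
    unfolding uhat_Suc grad inner_add_left inner_scaleR_left
    using has_derivative_smooth_max[OF L a(1) Suc.prems[of "Suc k"]] by (simp add: e_def)
  moreover have "\<forall>i\<le>Suc k. 0 \<le> a' i"
    using a(2) abs_deriv_le_one[of "L * (uhat \<eta> \<gamma> l0 u k x - u (Suc k) x)"]
    by (auto simp: a'_def e_def le_Suc_eq)
  moreover have "(\<Sum>i\<le>Suc k. a' i) = (1 + e) / 2 * (\<Sum>i\<le>k. a i) + (1 - e) / 2"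
    by (simp add: a'_def sum_distrib_left)
  then have "(\<Sum>i\<le>Suc k. a' i) = 1"
    using a(3) by (simp add: field_simps)
  moreover have "uhat \<eta> \<gamma> l0 u (Suc k) x \<le> u i x + (\<Sum>j=1..Suc k. 1 / lam \<gamma> l0 j)"
    if i: "i \<le> Suc k" and active: "a' i \<noteq> 0" for i
  proof (cases "i = Suc k")
    case True
    then have "uhat \<eta> \<gamma> l0 u (Suc k) x \<le> u (Suc k) x + 1 / L"
      unfolding uhat_Suc using active by (intro smooth_max_le_right L) (auto simp: a'_def e_def)
    moreover have "0 \<le> (\<Sum>j=1..k. 1 / lam \<gamma> l0 j)"
      using lam_pos[OF pos] by (simp add: sum_nonneg less_imp_le)
    ultimately show ?thesis
      unfolding True by (simp add: L_def)
  next
    case False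
    then have "i \<le> k" "a i \<noteq> 0"
      using i active by (auto simp: a'_def)
    moreover have "uhat \<eta> \<gamma> l0 u (Suc k) x \<le> uhat \<eta> \<gamma> l0 u k x + 1 / L"
      unfolding uhat_Suc using active False by (intro smooth_max_le_left L) (auto simp: a'_def e_def)
    ultimately show ?thesis
      using a(4) by (fastforce simp: L_def)
  qed
  ultimately show ?case
    by blast
qed

lemma norm_derivative_uhat_ge:
  fixes u :: "nat \<Rightarrow> 'a::real_inner \<Rightarrow> real" and N :: "nat \<Rightarrow> 'a"
  assumes \<gamma>: "0 < \<gamma>" "\<gamma> < 1/2" and \<Lambda>: "0 < \<Lambda>" "\<Lambda> \<le> l0" and k: "k \<le> q"
    and du: "\<And>i. i \<le> q \<Longrightarrow> (u i has_derivative (\<lambda>h. N i \<bullet> h)) (at x)"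
    and Lambda: "\<And>a. (\<forall>i\<le>q. a i \<ge> 0) \<Longrightarrow> (\<forall>i\<le>q. u i x \<le> - 2 / \<Lambda> \<longrightarrow> a i = 0) \<Longrightarrow>
                   (\<Sum>i\<le>q. a i) \<le> \<Lambda> * norm (\<Sum>i\<le>q. a i *\<^sub>R N i)"
    and lower: "- 1/\<Lambda> \<le> uhat \<eta> \<gamma> l0 u k x"
  shows "\<exists>g. (uhat \<eta> \<gamma> l0 u k has_derivative (\<lambda>h. g \<bullet> h)) (at x) \<and> 1/\<Lambda> \<le> norm g"
proof -
  have "0 < l0"
    using \<Lambda> by linarith
  moreover have "\<And>i. i \<le> k \<Longrightarrow> (u i has_derivative (\<lambda>h. N i \<bullet> h)) (at x)"
    using du k by simp
  ultimately obtain a where a: "(uhat \<eta> \<gamma> l0 u k has_derivative (\<lambda>h. (\<Sum>i\<le>k. a i *\<^sub>R N i) \<bullet> h)) (at x)"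
      "\<forall>i\<le>k. 0 \<le> a i" "(\<Sum>i\<le>k. a i) = 1"
      "\<forall>i\<le>k. a i \<noteq> 0 \<longrightarrow> uhat \<eta> \<gamma> l0 u k x \<le> u i x + (\<Sum>j=1..k. 1 / lam \<gamma> l0 j)"
    using uhat_has_derivative_convex_combination[OF \<gamma>(1)] by blast
  have \<delta>: "(\<Sum>j=1..k. 1 / lam \<gamma> l0 j) < 1 / \<Lambda>"
    using sum_inverse_lam_less[OF \<gamma> \<open>0 < l0\<close>, of k] frac_le[of 1 1 \<Lambda> l0] \<Lambda> by linarith
  define a' where "a' = (\<lambda>i. if i \<le> k then a i else 0)"
  have sums: "(\<Sum>i\<le>q. a' i) = (\<Sum>i\<le>k. a i)" "(\<Sum>i\<le>q. a' i *\<^sub>R N i) = (\<Sum>i\<le>k. a i *\<^sub>R N i)"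
    unfolding a'_def by (auto intro!: sum.mono_neutral_cong_right simp: k split: if_splits)
  have "a' i = 0" if "u i x \<le> - 2 / \<Lambda>" for i
  proof (rule ccontr)
    assume "a' i \<noteq> 0"
    then have "i \<le> k" "a i \<noteq> 0"
      by (auto simp: a'_def split: if_splits)
    then have "uhat \<eta> \<gamma> l0 u k x \<le> u i x + (\<Sum>j=1..k. 1 / lam \<gamma> l0 j)"
      using a(4) by blast
    moreover have "- 2 / \<Lambda> = - 1/\<Lambda> - 1/\<Lambda>"
      by simp
    ultimately show False
      using that lower \<delta> by linarith
  qed
  moreover have "\<forall>i\<le>q. 0 \<le> a' i"
    using a(2) by (simp add: a'_def)
  ultimately have "1 \<le> \<Lambda> * norm (\<Sum>i\<le>k. a i *\<^sub>R N i)"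
    using Lambda[of a'] a(3) sums by simp
  then have "1/\<Lambda> \<le> norm (\<Sum>i\<le>k. a i *\<^sub>R N i)"
    using \<Lambda>(1) by (simp add: divide_le_eq mult.commute)
  then show ?thesis
    using a(1) by blast
qed

end

theorem lemma2p10:
  fixes u :: "nat \<Rightarrow> 'a::euclidean_space \<Rightarrow> real"
    and N :: "nat \<Rightarrow> 'a" and c :: "nat \<Rightarrow> real"
    and q :: nat and \<Omega> :: "'a set"
    and \<eta> :: "real \<Rightarrow> real" and \<Lambda> :: real
  assumes dim: "DIM('a) \<ge> 3"
    and affine: "\<And>m x. m \<le> q \<Longrightarrow> u m x = N m \<bullet> x + c m"
    and unit: "\<And>m. m \<le> q \<Longrightarrow> norm (N m) = 1"
    and Omega_def: "\<Omega> = {x. \<forall>m\<le>q. u m x \<le> 0}"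
    and compact: "compact \<Omega>"
    and interior: "interior \<Omega> \<noteq> {}"
    and cond_a: "\<And>k. k \<le> q \<Longrightarrow> \<exists>x. u k x > 0 \<and> (\<forall>m\<le>q. m \<noteq> k \<longrightarrow> u m x \<le> 0)"
    and cond_c: "\<And>j k x. j < k \<Longrightarrow> k \<le> q \<Longrightarrow> x \<in> \<Omega> \<Longrightarrow> u j x = 0 \<Longrightarrow> u k x = 0
                   \<Longrightarrow> N j \<bullet> N k \<le> 0"
    and eta_smooth: "smooth_real \<eta>"
    and eta_even: "\<And>t. \<eta> (- t) = \<eta> t"
    and eta_abs: "\<And>t. \<bar>t\<bar> \<ge> 1/2 \<Longrightarrow> \<eta> t = \<bar>t\<bar>"
    and eta_convex: "\<And>t. deriv (deriv \<eta>) t \<ge> 0"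
    and Lambda_gt: "\<Lambda> > 1"
    and Lambda: "\<And>x a. x \<in> \<Omega> \<Longrightarrow> (\<forall>i\<le>q. a i \<ge> 0) \<Longrightarrow>
                   (\<forall>i\<le>q. u i x \<le> - 2 / \<Lambda> \<longrightarrow> a i = 0) \<Longrightarrow>
                   (\<Sum>i\<le>q. a i) \<le> \<Lambda> * norm (\<Sum>i\<le>q. a i *\<^sub>R N i)"
  shows "\<forall>\<gamma>. 0 < \<gamma> \<and> \<gamma> < 1/2 \<longrightarrow>
          (\<exists>lbar. \<forall>l0. l0 > 1 \<and> l0 \<ge> lbar \<longrightarrow>
             (\<forall>k\<le>q. \<forall>x\<in>\<Omega>. - 1/\<Lambda> \<le> uhat \<eta> \<gamma> l0 u k x \<and> uhat \<eta> \<gamma> l0 u k x \<le> 0 \<longrightarrow>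
                (\<exists>g. (uhat \<eta> \<gamma> l0 u k has_derivative (\<lambda>h. g \<bullet> h)) (at x) \<and> norm g \<ge> 1/\<Lambda>))
           \<and> (\<forall>x. uhat \<eta> \<gamma> l0 u q x = 0 \<longrightarrow>
                (\<exists>g. (uhat \<eta> \<gamma> l0 u q has_derivative (\<lambda>h. g \<bullet> h)) (at x) \<and> g \<noteq> 0)))"
proof -
  interpret abs_smoothing \<eta>
    using eta_smooth eta_even eta_abs eta_convex by unfold_locales
  have du: "(u m has_derivative (\<lambda>h. N m \<bullet> h)) (at x)" if "m \<le> q" for m x
    by (subst ext[of "u m", OF affine[OF that]]) (auto intro!: derivative_eq_intros)
  have grad: "\<exists>g. (uhat \<eta> \<gamma> l0 u k has_derivative (\<lambda>h. g \<bullet> h)) (at x) \<and> 1/\<Lambda> \<le> norm g"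
    if "0 < \<gamma>" "\<gamma> < 1/2" "\<Lambda> \<le> l0" "k \<le> q" "x \<in> \<Omega>" "- 1/\<Lambda> \<le> uhat \<eta> \<gamma> l0 u k x"
    for \<gamma> l0 k x
    using norm_derivative_uhat_ge[of \<gamma> \<Lambda> l0 k q u N x] Lambda_gt that du Lambda[OF \<open>x \<in> \<Omega>\<close>] by simp
  show ?thesis
  proof (intro allI impI exI[of _ \<Lambda>] conjI ballI)
    fix \<gamma> l0 :: real and k x
    assume "0 < \<gamma> \<and> \<gamma> < 1/2" "1 < l0 \<and> \<Lambda> \<le> l0" "k \<le> q" "x \<in> \<Omega>"
      "- 1/\<Lambda> \<le> uhat \<eta> \<gamma> l0 u k x \<and> uhat \<eta> \<gamma> l0 u k x \<le> 0"
    then show "\<exists>g. (uhat \<eta> \<gamma> l0 u k has_derivative (\<lambda>h. g \<bullet> h)) (at x) \<and> 1/\<Lambda> \<le> norm g"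
      using grad by blast
  next
    fix \<gamma> l0 :: real and x
    assume \<gamma>: "0 < \<gamma> \<and> \<gamma> < 1/2" and l0: "1 < l0 \<and> \<Lambda> \<le> l0" and zero: "uhat \<eta> \<gamma> l0 u q x = 0"
    then have "x \<in> \<Omega>"
      using u_le_uhat[of \<gamma> l0 _ q u x] Omega_def by auto
    then obtain g where "(uhat \<eta> \<gamma> l0 u q has_derivative (\<lambda>h. g \<bullet> h)) (at x)" "1/\<Lambda> \<le> norm g"
      using grad[of \<gamma> l0 q x] \<gamma> l0 zero Lambda_gt by auto
    then show "\<exists>g. (uhat \<eta> \<gamma> l0 u q has_derivative (\<lambda>h. g \<bullet> h)) (at x) \<and> g \<noteq> 0"
      using Lambda_gt by auto
  qed
qed

end
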